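(* There is no cubic graph $G$ with a proper $5$-edge-coloring $c$ such that $|N_G(c)|=1$.
   Context: Graphs are finite, undirected, loopless, and may contain parallel edges. A proper $5$-edge-coloring of $G$ is a map $c:E(G)\to\{1,\dots,5\}$ with adjacent edges receiving different colors. For such $c$ and a vertex $v$, $S_c(v)$ is the set of colors on edges incident to $v$. An edge $uv$ of a cubic graph is poor if $|S_c(u)\cup S_c(v)|=3$, rich if $|S_c(u)\cup S_c(v)|=5$, and abnormal if it is neither poor nor rich. $N_G(c)$ denotes the set of abnormal edges of $G$ with respect to $c$. *)

theory Defs
  imports Main
begin

text \<open>A finite undirected loopless multigraph: vertex set V, edge set E (edges are
abstract objects, so parallel edges are allowed), and an endpoint map ends giving each
edge a set of exactly two distinct vertices of V.\<close>

definition multigraph :: "'v set \<Rightarrow> 'e set \<Rightarrow> ('e \<Rightarrow> 'v set) \<Rightarrow> bool" where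
  "multigraph V E ends \<longleftrightarrow> finite V \<and> finite E \<and>
     (\<forall>e\<in>E. ends e \<subseteq> V \<and> card (ends e) = 2)"

definition incident :: "'e set \<Rightarrow> ('e \<Rightarrow> 'v set) \<Rightarrow> 'v \<Rightarrow> 'e set" where
  "incident E ends v = {e\<in>E. v \<in> ends e}"

definition cubic :: "'v set \<Rightarrow> 'e set \<Rightarrow> ('e \<Rightarrow> 'v set) \<Rightarrow> bool" where
  "cubic V E ends \<longleftrightarrow> multigraph V E ends \<and> (\<forall>v\<in>V. card (incident E ends v) = 3)"

definition proper_5_edge_coloring :: "'e set \<Rightarrow> ('e \<Rightarrow> 'v set) \<Rightarrow> ('e \<Rightarrow> nat) \<Rightarrow> bool" where
  "proper_5_edge_coloring E ends c \<longleftrightarrow>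
     (\<forall>e\<in>E. c e \<in> {1..5}) \<and>
     (\<forall>e\<in>E. \<forall>f\<in>E. e \<noteq> f \<and> ends e \<inter> ends f \<noteq> {} \<longrightarrow> c e \<noteq> c f)"

definition Sc :: "'e set \<Rightarrow> ('e \<Rightarrow> 'v set) \<Rightarrow> ('e \<Rightarrow> nat) \<Rightarrow> 'v \<Rightarrow> nat set" where
  "Sc E ends c v = c ` incident E ends v"

definition edge_colors :: "'e set \<Rightarrow> ('e \<Rightarrow> 'v set) \<Rightarrow> ('e \<Rightarrow> nat) \<Rightarrow> 'e \<Rightarrow> nat set" where
  "edge_colors E ends c e = (\<Union>v\<in>ends e. Sc E ends c v)"

definition poor_edge where
  "poor_edge E ends c e \<longleftrightarrow> card (edge_colors E ends c e) = 3"

definition rich_edge where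
  "rich_edge E ends c e \<longleftrightarrow> card (edge_colors E ends c e) = 5"

definition abnormal_edges :: "'e set \<Rightarrow> ('e \<Rightarrow> 'v set) \<Rightarrow> ('e \<Rightarrow> nat) \<Rightarrow> 'e set" where
  "abnormal_edges E ends c = {e\<in>E. \<not> poor_edge E ends c e \<and> \<not> rich_edge E ends c e}"

end

theory Submission
  imports Defs
begin

text \<open>Each vertex misses exactly two of the five colours. Fix a colour k and a splitting of
the other four colours into two pairs R, R', and let X be the set of vertices whose missing pair
is R or R'. Every vertex of X has exactly one incident edge of colour k, and a normal edge of
colour k has both or none of its ends in X; hence |X| has the parity of the number of abnormal
k-edges with exactly one end in X. If e is the only abnormal edge, of colour a, this makes
|X| even for every splitting at every k \<noteq> a, but odd for the splitting at a given by the
missing pair of an end of e. That is impossible: writing n(P) for the number of vertices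
missing P, the even sums n(P) + n(P') at the colours k \<noteq> a form a 4-cycle whose total
forces every sum at a to be even as well.\<close>

lemma even_pair_count_sum_at_remaining_point:
  fixes S :: "'a set" and n :: "'a set \<Rightarrow> nat"
  assumes S: "card S = 5" and a: "a \<in> S"
    and even_off_a: "\<And>k R. k \<in> S \<Longrightarrow> k \<noteq> a \<Longrightarrow> R \<subseteq> S - {k} \<Longrightarrow> card R = 2 \<Longrightarrow>
        even (n R + n (S - {k} - R))"
    and P: "P \<subseteq> S - {a}" "card P = 2"
  shows "even (n P + n (S - {a} - P))"
proof -
  obtain i j where ij: "i \<noteq> j" "P = {i, j}"
    using P(2) by (meson card_2_iff)
  have "finite S" using S by (simp add: card_ge_0_finite)
  then have "card (S - {a} - P) = 2"
    using S a P by (simp add: card_Diff_subset finite_subset)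
  then obtain l m where lm: "l \<noteq> m" "S - {a} - P = {l, m}"
    by (meson card_2_iff)
  have S_eq: "S = {a, i, j, l, m}" and dist: "distinct [a, i, j, l, m]"
    using a P(1) ij lm by auto
  have even: "even (n {p, q} + n {r, s})"
    if "distinct [k, p, q, r, s]" "S = {k, p, q, r, s}" "k \<noteq> a" for k p q r s
  proof -
    have "S - {k} - {p, q} = {r, s}" using that(1,2) by auto
    then show ?thesis
      using even_off_a[of k "{p, q}"] that by auto
  qed
  have "even (n {i, j} + n {a, m})" by (rule even[of l]) (use S_eq dist in auto)
  moreover have "even (n {a, m} + n {j, l})" by (rule even[of i]) (use S_eq dist in auto)
  moreover have "even (n {j, l} + n {a, i})" by (rule even[of m]) (use S_eq dist in auto)
  moreover have "even (n {a, i} + n {l, m})" by (rule even[of j]) (use S_eq dist in auto)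
  ultimately have "even (n {i, j} + n {l, m})" by presburger
  then show ?thesis using ij lm by simp
qed

lemma same_pair_partition:
  assumes "Q \<in> {P, C - P}" "P \<subseteq> C" "R \<subseteq> C"
  shows "P \<in> {R, C - R} \<longleftrightarrow> Q \<in> {R, C - R}"
  using assms by (auto simp: double_diff)

lemma card_complementary_pair:
  fixes k :: nat
  assumes "k \<in> {1..5}" "P \<subseteq> {1..5} - {k}" "card P = 2"
  shows "card ({1..5} - {k} - P) = 2"
proof -
  have "card ({1..5::nat} - {k}) = 4" using assms(1) by simp
  then show ?thesis using assms(2,3) by (simp add: card_Diff_subset finite_subset)
qed

locale cubic_5_edge_coloring =
  fixes V :: "'v set" and E :: "'e set" and ends :: "'e \<Rightarrow> 'v set" and c :: "'e \<Rightarrow> nat"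
  assumes cubic: "cubic V E ends" and coloring: "proper_5_edge_coloring E ends c"
begin

definition missing :: "'v \<Rightarrow> nat set" where
  "missing v = {1..5} - Sc E ends c v"

definition pair_count :: "nat set \<Rightarrow> nat" where
  "pair_count R = card {v\<in>V. missing v = R}"

definition pair_splitting :: "nat \<Rightarrow> nat set \<Rightarrow> nat set set" where
  "pair_splitting k R = {R, {1..5} - {k} - R}"

definition splitting_vertices :: "nat \<Rightarrow> nat set \<Rightarrow> 'v set" where
  "splitting_vertices k R = {v\<in>V. missing v \<in> pair_splitting k R}"

lemma finite_V: "finite V" and finite_E: "finite E"
  using cubic unfolding cubic_def multigraph_def by auto

lemma ends_subset: "e \<in> E \<Longrightarrow> ends e \<subseteq> V"
  using cubic unfolding cubic_def multigraph_def by auto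

lemma ends_two_vertices: "e \<in> E \<Longrightarrow> \<exists>u w. u \<noteq> w \<and> ends e = {u, w}"
  using cubic unfolding cubic_def multigraph_def by (fastforce simp: card_2_iff)

lemma color_range: "e \<in> E \<Longrightarrow> c e \<in> {1..5}"
  using coloring unfolding proper_5_edge_coloring_def by auto

lemma color_unique_at_vertex:
  "e \<in> E \<Longrightarrow> f \<in> E \<Longrightarrow> v \<in> ends e \<Longrightarrow> v \<in> ends f \<Longrightarrow> c e = c f \<Longrightarrow> e = f"
  using coloring unfolding proper_5_edge_coloring_def by blast

lemma Sc_subset: "Sc E ends c v \<subseteq> {1..5}"
  unfolding Sc_def incident_def using color_range by auto

lemma card_Sc: "v \<in> V \<Longrightarrow> card (Sc E ends c v) = 3"
proof -
  assume v: "v \<in> V"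
  have "inj_on c (incident E ends v)"
    by (rule inj_onI) (auto simp: incident_def intro: color_unique_at_vertex)
  moreover have "card (incident E ends v) = 3" using cubic v unfolding cubic_def by auto
  ultimately show ?thesis unfolding Sc_def by (simp add: card_image)
qed

lemma missing_subset: "missing v \<subseteq> {1..5}"
  unfolding missing_def by auto

lemma finite_missing: "finite (missing v)"
  using missing_subset finite_subset by blast

lemma card_missing: "v \<in> V \<Longrightarrow> card (missing v) = 2"
  unfolding missing_def using card_Sc[of v] Sc_subset[of v]
  by (simp add: card_Diff_subset finite_subset)

lemma Sc_eq_missing: "Sc E ends c v = {1..5} - missing v"
  unfolding missing_def using Sc_subset[of v] by auto

lemma color_not_missing: "e \<in> E \<Longrightarrow> v \<in> ends e \<Longrightarrow> c e \<notin> missing v"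
  unfolding missing_def Sc_def incident_def by auto

lemma edge_colors_ends: "ends e = {u, w} \<Longrightarrow> edge_colors E ends c e = Sc E ends c u \<union> Sc E ends c w"
  unfolding edge_colors_def by auto

lemma card_edge_colors:
  assumes "ends e = {u, w}"
  shows "card (edge_colors E ends c e) = 5 - card (missing u \<inter> missing w)"
proof -
  have "card ({1..5} - (missing u \<inter> missing w)) = 5 - card (missing u \<inter> missing w)"
    using missing_subset[of u] by (subst card_Diff_subset) (auto intro: finite_subset)
  moreover have "edge_colors E ends c e = {1..5} - (missing u \<inter> missing w)"
    using edge_colors_ends[OF assms] by (auto simp: Sc_eq_missing)
  ultimately show ?thesis by simp
qed

lemma poor_edge_iff_same_missing:
  assumes e: "e \<in> E" "ends e = {u, w}"
  shows "poor_edge E ends c e \<longleftrightarrow> missing w = missing u"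
proof -
  have uw: "u \<in> V" "w \<in> V"
    using e ends_subset by auto
  have "card (missing u \<inter> missing w) = 2 \<longleftrightarrow> missing w = missing u"
    using card_missing[OF uw(1)] card_missing[OF uw(2)]
    by (metis Int_lower1 Int_lower2 card.infinite card_subset_eq inf.idem zero_neq_numeral)
  moreover have "card (missing u \<inter> missing w) \<le> 2"
    using card_missing[OF uw(1)] card_mono[OF finite_missing Int_lower1] by metis
  ultimately show ?thesis
    unfolding poor_edge_def card_edge_colors[OF e(2)] by linarith
qed

lemma rich_edge_iff_complementary_missing:
  assumes e: "e \<in> E" "ends e = {u, w}"
  shows "rich_edge E ends c e \<longleftrightarrow> missing w = {1..5} - {c e} - missing u"
proof -
  have uw: "u \<in> V" "w \<in> V"
    using e ends_subset by auto
  have ce: "c e \<in> {1..5}" "c e \<notin> missing u" "c e \<notin> missing w"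
    using e color_range color_not_missing by auto
  have "missing u \<inter> missing w = {} \<longleftrightarrow> missing w = {1..5} - {c e} - missing u"
  proof
    assume "missing u \<inter> missing w = {}"
    then have "missing w \<subseteq> {1..5} - {c e} - missing u"
      using ce missing_subset[of w] by auto
    moreover have "card ({1..5} - {c e} - missing u) = 2"
      using ce missing_subset[of u] card_missing[OF uw(1)] by (intro card_complementary_pair) auto
    ultimately show "missing w = {1..5} - {c e} - missing u"
      using card_missing[OF uw(2)] by (simp add: card_subset_eq)
  qed auto
  moreover have "card (missing u \<inter> missing w) = 0 \<longleftrightarrow> missing u \<inter> missing w = {}"
    by (simp add: finite_missing)
  ultimately show ?thesis
    unfolding rich_edge_def card_edge_colors[OF e(2)] by linarith
qed

lemma normal_iff_missing_in_splitting:
  assumes "e \<in> E" "ends e = {u, w}"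
  shows "e \<notin> abnormal_edges E ends c \<longleftrightarrow> missing w \<in> pair_splitting (c e) (missing u)"
  using assms poor_edge_iff_same_missing rich_edge_iff_complementary_missing
  unfolding abnormal_edges_def pair_splitting_def by auto

lemma card_splitting_vertices_eq_sum:
  assumes k: "k \<in> {1..5}" and R: "R \<subseteq> {1..5} - {k}"
  shows "card (splitting_vertices k R) = (\<Sum>e\<in>{e\<in>E. c e = k}. card (ends e \<inter> splitting_vertices k R))"
proof -
  let ?X = "splitting_vertices k R" and ?Ek = "{e\<in>E. c e = k}"
  have one_k_edge: "card {e\<in>?Ek. v \<in> ends e} = 1" if v: "v \<in> ?X" for v
  proof -
    have "v \<in> V" "missing v \<in> pair_splitting k R"
      using v unfolding splitting_vertices_def by auto
    moreover have "k \<notin> S" if "S \<in> pair_splitting k R" for S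
      using that R unfolding pair_splitting_def by auto
    ultimately obtain e where e: "e \<in> E" "v \<in> ends e" "c e = k"
      using k unfolding missing_def Sc_def incident_def by blast
    then have "{e\<in>?Ek. v \<in> ends e} = {e}" using color_unique_at_vertex by auto
    then show ?thesis by simp
  qed
  have finite_X: "finite ?X"
    using finite_V unfolding splitting_vertices_def by simp
  have "card ?X = (\<Sum>v\<in>?X. card {e\<in>?Ek. v \<in> ends e})" using one_k_edge by simp
  also have "\<dots> = (\<Sum>v\<in>?X. \<Sum>e\<in>?Ek. if v \<in> ends e then 1 else 0)"
    using finite_E by (simp add: sum.inter_filter[symmetric])
  also have "\<dots> = (\<Sum>e\<in>?Ek. \<Sum>v\<in>?X. if v \<in> ends e then 1 else 0)"
    by (rule sum.swap)
  also have "\<dots> = (\<Sum>e\<in>?Ek. card {v\<in>?X. v \<in> ends e})"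
    using finite_X by (simp add: sum.inter_filter[symmetric])
  also have "\<dots> = (\<Sum>e\<in>?Ek. card (ends e \<inter> ?X))"
    by (intro sum.cong refl arg_cong[where f = card]) auto
  finally show ?thesis .
qed

lemma even_card_ends_inter_splitting_vertices:
  assumes e: "e \<in> E" "e \<notin> abnormal_edges E ends c" and R: "R \<subseteq> {1..5} - {c e}"
  shows "even (card (ends e \<inter> splitting_vertices (c e) R))"
proof -
  obtain u w where uw: "u \<noteq> w" "ends e = {u, w}" "u \<in> V" "w \<in> V"
    using ends_two_vertices[OF e(1)] ends_subset[OF e(1)] by auto
  have "missing w \<in> pair_splitting (c e) (missing u)"
    using normal_iff_missing_in_splitting[OF e(1) uw(2)] e(2) by simp
  moreover have "missing u \<subseteq> {1..5} - {c e}"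
    using color_not_missing[OF e(1)] uw(2) missing_subset by auto
  ultimately have "missing u \<in> pair_splitting (c e) R \<longleftrightarrow> missing w \<in> pair_splitting (c e) R"
    using R unfolding pair_splitting_def by (rule same_pair_partition)
  then have "u \<in> splitting_vertices (c e) R \<longleftrightarrow> w \<in> splitting_vertices (c e) R"
    using uw unfolding splitting_vertices_def by simp
  then have "ends e \<inter> splitting_vertices (c e) R = {} \<or> ends e \<inter> splitting_vertices (c e) R = {u, w}"
    using uw by auto
  then show ?thesis using uw(1) by auto
qed

lemma even_card_splitting_vertices_iff:
  assumes k: "k \<in> {1..5}" and R: "R \<subseteq> {1..5} - {k}"
  shows "even (card (splitting_vertices k R)) \<longleftrightarrow>
    even (\<Sum>e\<in>{e\<in>abnormal_edges E ends c. c e = k}. card (ends e \<inter> splitting_vertices k R))"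
proof -
  let ?X = "splitting_vertices k R" and ?A = "{e\<in>abnormal_edges E ends c. c e = k}"
  have "?A \<subseteq> {e\<in>E. c e = k}"
    unfolding abnormal_edges_def by auto
  then have "card ?X = (\<Sum>e\<in>{e\<in>E. c e = k} - ?A. card (ends e \<inter> ?X)) + (\<Sum>e\<in>?A. card (ends e \<inter> ?X))"
    using card_splitting_vertices_eq_sum[OF k R] finite_E by (simp add: sum.subset_diff)
  moreover have "even (\<Sum>e\<in>{e\<in>E. c e = k} - ?A. card (ends e \<inter> ?X))"
    using even_card_ends_inter_splitting_vertices R by (intro dvd_sum) auto
  ultimately show ?thesis by simp
qed

lemma card_splitting_vertices:
  assumes "R \<subseteq> {1..5} - {k}" "card R = 2"
  shows "card (splitting_vertices k R) = pair_count R + pair_count ({1..5} - {k} - R)"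
proof -
  have "R \<noteq> {}" using assms(2) by auto
  then have "R \<noteq> {1..5} - {k} - R" by (metis Diff_disjoint Int_absorb)
  then have "splitting_vertices k R = {v\<in>V. missing v = R} \<union> {v\<in>V. missing v = {1..5} - {k} - R}"
    and "{v\<in>V. missing v = R} \<inter> {v\<in>V. missing v = {1..5} - {k} - R} = {}"
    unfolding splitting_vertices_def pair_splitting_def by auto
  then show ?thesis
    unfolding pair_count_def using finite_V by (simp add: card_Un_disjoint)
qed

lemma even_pair_count_sum:
  assumes "k \<in> {1..5}" "R \<subseteq> {1..5} - {k}" "card R = 2"
    and "\<forall>e\<in>abnormal_edges E ends c. c e \<noteq> k"
  shows "even (pair_count R + pair_count ({1..5} - {k} - R))"
proof -
  have no_k_edge: "{e\<in>abnormal_edges E ends c. c e = k} = {}" using assms(4) by auto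
  show ?thesis
    using even_card_splitting_vertices_iff[of k R] card_splitting_vertices[of R k] assms(1-3)
    unfolding no_k_edge by simp
qed

lemma odd_pair_count_sum_at_unique_abnormal_edge:
  assumes A: "abnormal_edges E ends c = {e}" and x: "x \<in> ends e"
  shows "odd (pair_count (missing x) + pair_count ({1..5} - {c e} - missing x))"
proof -
  have e: "e \<in> E" using A unfolding abnormal_edges_def by auto
  obtain u w where "u \<noteq> w" "ends e = {u, w}"
    using ends_two_vertices[OF e] by auto
  then have "\<exists>y. x \<noteq> y \<and> ends e = {x, y}"
    using x by (cases "x = u") (auto simp: insert_commute)
  then obtain y where y: "x \<noteq> y" "ends e = {x, y}" by blast
  then have xy: "x \<in> V" "y \<in> V" using ends_subset[OF e] by auto
  have R: "missing x \<subseteq> {1..5} - {c e}"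
    using color_not_missing[OF e x] missing_subset by auto
  have "missing y \<notin> pair_splitting (c e) (missing x)"
    using normal_iff_missing_in_splitting[OF e y(2)] A by simp
  then have "x \<in> splitting_vertices (c e) (missing x)" "y \<notin> splitting_vertices (c e) (missing x)"
    using xy unfolding splitting_vertices_def pair_splitting_def by auto
  then have "ends e \<inter> splitting_vertices (c e) (missing x) = {x}"
    using y by auto
  moreover have "{e'\<in>abnormal_edges E ends c. c e' = c e} = {e}" using A by auto
  ultimately have "odd (card (splitting_vertices (c e) (missing x)))"
    using even_card_splitting_vertices_iff[OF color_range[OF e] R] by simp
  then show ?thesis
    using card_splitting_vertices[OF R card_missing[OF xy(1)]] by simp
qed

end

theorem mainTheorem6:
  fixes V :: "'v set" and E :: "'e set" and ends :: "'e \<Rightarrow> 'v set" and c :: "'e \<Rightarrow> nat"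
  assumes "cubic V E ends"
    and "proper_5_edge_coloring E ends c"
  shows "card (abnormal_edges E ends c) \<noteq> 1"
proof
  interpret cubic_5_edge_coloring V E ends c using assms by unfold_locales
  assume "card (abnormal_edges E ends c) = 1"
  then obtain e where A: "abnormal_edges E ends c = {e}" by (auto simp: card_1_singleton_iff)
  then have e: "e \<in> E" unfolding abnormal_edges_def by auto
  obtain x y where "ends e = {x, y}"
    using ends_two_vertices[OF e] by blast
  then have x: "x \<in> ends e" by simp
  have even_off_ce: "even (pair_count R + pair_count ({1..5} - {k} - R))"
    if "k \<in> {1..5}" "k \<noteq> c e" "R \<subseteq> {1..5} - {k}" "card R = 2" for k R
    using that A by (intro even_pair_count_sum) auto
  have "missing x \<subseteq> {1..5} - {c e}"
    using color_not_missing[OF e x] missing_subset by auto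
  moreover have "card (missing x) = 2"
    using card_missing ends_subset[OF e] x by blast
  ultimately have "even (pair_count (missing x) + pair_count ({1..5} - {c e} - missing x))"
    by (intro even_pair_count_sum_at_remaining_point[OF _ color_range[OF e] even_off_ce]) simp_all
  moreover have "odd (pair_count (missing x) + pair_count ({1..5} - {c e} - missing x))"
    using odd_pair_count_sum_at_unique_abnormal_edge[OF A] x by simp
  ultimately show False by simp
qed

end
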